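(* Let $T$ be a key with at most $n$ rows. Then $\mathrm{cap}_n(T)$ is also a key. Moreover, if $T'$ is another key of the same shape, then $\mathrm{cap}_n(T)\ge T'$ (entrywise) if and only if $T\ge T'$ (entrywise) and $\max(T')\le n$.
   Context: Tableaux are drawn in English convention with positive integer entries; $T_c$ denotes the set of entries of column $c$. A key is a tableau whose columns are strictly increasing top to bottom and satisfy $T_1\supseteq T_2\supseteq\cdots$. For a key $T$ with at most $n$ rows, $\mathrm{cap}_n(T)$ is obtained by replacing, in each column, the entries larger than $n$ by the largest integers in $[n]$ that are missing from that column, and then sorting each column increasingly. Inequalities between tableaux of the same shape are entrywise (cell by cell). *)

theory Defs
  imports Main
begin

text \<open>A tableau is represented as the list of its columns (left to right); each column is
  the list of its entries read top to bottom. Entries are positive naturals.\<close>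

type_synonym tableau = "nat list list"

definition shape :: "tableau \<Rightarrow> nat list" where
  "shape T = map length T"

definition is_tableau :: "tableau \<Rightarrow> bool" where
  "is_tableau T \<longleftrightarrow> (\<forall>c \<in> set T. c \<noteq> [] \<and> (\<forall>x \<in> set c. 0 < x))
     \<and> sorted_wrt (\<ge>) (shape T)"

definition is_key :: "tableau \<Rightarrow> bool" where
  "is_key T \<longleftrightarrow> is_tableau T
     \<and> (\<forall>c \<in> set T. sorted_wrt (<) c)
     \<and> (\<forall>i. Suc i < length T \<longrightarrow> set (T ! Suc i) \<subseteq> set (T ! i))"

definition num_rows :: "tableau \<Rightarrow> nat" where
  "num_rows T = (if T = [] then 0 else length (hd T))"

definition largest :: "nat \<Rightarrow> nat set \<Rightarrow> nat set" where
  "largest k S = {x \<in> S. card {y \<in> S. x < y} < k}"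

text \<open>cap_n on one column: replace entries > n by the largest integers of [n]
  missing from the column, then sort increasingly.\<close>
definition cap_col :: "nat \<Rightarrow> nat list \<Rightarrow> nat list" where
  "cap_col n c = sorted_list_of_set
     ({x \<in> set c. x \<le> n} \<union> largest (card {x \<in> set c. n < x}) ({1..n} - set c))"

definition cap :: "nat \<Rightarrow> tableau \<Rightarrow> tableau" where
  "cap n T = map (cap_col n) T"

definition tab_le :: "tableau \<Rightarrow> tableau \<Rightarrow> bool" where
  "tab_le A B \<longleftrightarrow> shape A = shape B
     \<and> (\<forall>i < length A. \<forall>j < length (A ! i). A ! i ! j \<le> B ! i ! j)"

definition max_entry_le :: "tableau \<Rightarrow> nat \<Rightarrow> bool" where
  "max_entry_le T n \<longleftrightarrow> (\<forall>c \<in> set T. \<forall>x \<in> set c. x \<le> n)"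

end

theory Submission
  imports Defs
begin

(* Capping a strictly increasing column c of length l \<le> n amounts to taking, entry by entry,
   the minimum with the largest possible column n - l + 1, ..., n:
   cap_n(c)_j = min (c_j) (n + 1 + j - l), rows j counted from 0 (cap_col_nth).
   This is seen by counting, for each 1 \<le> v \<le> n, the entries of cap_n(c) below v: they are
   the entries of c below v together with those of the inserted block of largest missing
   values, and the count works out to max (#{x \<in> c. x < v}) (l + v - n - 1).
   The closed form gives the comparison at once, since a strictly increasing column lies below
   n - l + 1, ..., n iff its entries are at most n. Nestedness of the columns survives capping
   because fewer entries above n and more missing values can only enlarge the inserted block. *)

lemma le_nth_iff_card_less:
  fixes xs :: "'a::linorder list"
  assumes sorted: "sorted_wrt (<) xs" and j: "j < length xs"
  shows "v \<le> xs ! j \<longleftrightarrow> card {x \<in> set xs. x < v} \<le> j"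
proof -
  let ?I = "{i. i < length xs \<and> xs ! i < v}"
  have "{x \<in> set xs. x < v} = (!) xs ` ?I"
    by (auto simp: in_set_conv_nth)
  moreover have "inj_on ((!) xs) ?I"
    using sorted by (auto simp: inj_on_def strict_sorted_iff nth_eq_iff_index_eq)
  ultimately have card_eq: "card {x \<in> set xs. x < v} = card ?I"
    by (simp add: card_image)
  note mono = sorted_nth_mono[OF strict_sorted_imp_sorted[OF sorted]]
  show ?thesis
  proof
    assume "v \<le> xs ! j"
    then have "?I \<subseteq> {..<j}"
      using mono[of j] by (force simp: not_less[symmetric] intro: order_trans)
    then show "card {x \<in> set xs. x < v} \<le> j"
      using card_eq card_mono[of "{..<j}" ?I] by simp
  next
    assume card_le: "card {x \<in> set xs. x < v} \<le> j"
    show "v \<le> xs ! j"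
    proof (rule ccontr)
      assume "\<not> v \<le> xs ! j"
      then have "{..j} \<subseteq> ?I"
        using mono[of _ j] j by (auto simp: not_le intro: le_less_trans)
      then have "Suc j \<le> card ?I"
        using card_mono[of ?I "{..j}"] by simp
      with card_le card_eq show False by simp
    qed
  qed
qed

lemma strict_sorted_nth_add_diff_le:
  fixes xs :: "nat list"
  assumes sorted: "sorted_wrt (<) xs" and "i \<le> j" "j < length xs"
  shows "xs ! i + (j - i) \<le> xs ! j"
  using assms(2,3)
proof (induction j)
  case (Suc j)
  show ?case
  proof (cases "i = Suc j")
    case False
    with Suc have "xs ! i + (j - i) \<le> xs ! j" "xs ! j < xs ! Suc j"
      using sorted_wrt_nth_less[OF sorted, of j "Suc j"] by simp_all
    with False Suc.prems show ?thesis by simp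
  qed simp
qed simp

lemma strict_sorted_set_le_iff:
  fixes xs :: "nat list"
  assumes sorted: "sorted_wrt (<) xs"
  shows "(\<forall>x \<in> set xs. x \<le> n) \<longleftrightarrow> (\<forall>j < length xs. xs ! j + length xs \<le> n + Suc j)"
proof
  assume le: "\<forall>x \<in> set xs. x \<le> n"
  show "\<forall>j < length xs. xs ! j + length xs \<le> n + Suc j"
  proof (intro allI impI)
    fix j assume j: "j < length xs"
    have "xs ! j + (length xs - 1 - j) \<le> xs ! (length xs - 1)"
      using strict_sorted_nth_add_diff_le[OF sorted, of j "length xs - 1"] j by simp
    moreover have "xs ! (length xs - 1) \<le> n"
      using le j by simp
    ultimately show "xs ! j + length xs \<le> n + Suc j"
      using j by linarith
  qed
next
  assume le: "\<forall>j < length xs. xs ! j + length xs \<le> n + Suc j"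
  show "\<forall>x \<in> set xs. x \<le> n"
  proof
    fix x assume "x \<in> set xs"
    then obtain j where j: "j < length xs" "x = xs ! j"
      by (auto simp: in_set_conv_nth)
    with le[rule_format, OF j(1)] show "x \<le> n"
      by linarith
  qed
qed

lemma largest_subset: "largest k M \<subseteq> M"
  by (auto simp: largest_def)

lemma card_largest:
  assumes fin: "finite M" and k: "k \<le> card M"
  shows "card (largest k M) = k"
proof -
  define rank where "rank x = card {y \<in> M. x < y}" for x
  have rank_less: "rank y < rank x" if "x \<in> M" "y \<in> M" "x < y" for x y
    unfolding rank_def using fin that by (intro psubset_card_mono) auto
  then have inj: "inj_on rank M"
    by (intro linorder_inj_onI') (metis less_irrefl)
  have "rank x < card M" if "x \<in> M" for x
    unfolding rank_def using fin that by (intro psubset_card_mono) auto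
  then have "rank ` M \<subseteq> {..<card M}"
    by auto
  then have rank_image: "rank ` M = {..<card M}"
    by (intro card_subset_eq) (auto simp: card_image[OF inj])
  have "rank ` largest k M = {t \<in> rank ` M. t < k}"
    by (auto simp: largest_def rank_def)
  also have "\<dots> = {..<k}"
    using rank_image k by auto
  finally have "card (rank ` largest k M) = k"
    by simp
  then show ?thesis
    using inj_on_subset[OF inj largest_subset] by (simp add: card_image)
qed

lemma largest_upward_closed:
  assumes "finite M" "x \<in> largest k M" "y \<in> M" "x \<le> y"
  shows "y \<in> largest k M"
proof -
  have "card {z \<in> M. y < z} \<le> card {z \<in> M. x < z}"
    using assms by (intro card_mono) auto
  with assms show ?thesis
    by (auto simp: largest_def)
qed

lemma largest_mono:
  assumes "finite M'" "M \<subseteq> M'" "k' \<le> k"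
  shows "largest k' M' \<inter> M \<subseteq> largest k M"
proof
  fix x assume x: "x \<in> largest k' M' \<inter> M"
  have "card {y \<in> M. x < y} \<le> card {y \<in> M'. x < y}"
    using assms by (intro card_mono) auto
  with x assms(3) show "x \<in> largest k M"
    by (auto simp: largest_def)
qed

lemma card_largest_less:
  assumes fin: "finite M" and k: "k \<le> card M"
  shows "card {x \<in> largest k M. x < v} = k - card {y \<in> M. v \<le> y}"
proof (cases "\<exists>x \<in> largest k M. x < v")
  case True
  then obtain x where x: "x \<in> largest k M" "x < v"
    by blast
  have "{y \<in> M. v \<le> y} \<subseteq> largest k M"
    using largest_upward_closed[OF fin x(1)] x(2) by auto
  moreover have "{x \<in> largest k M. x < v} = largest k M - {y \<in> M. v \<le> y}"
    using largest_subset[of k M] by auto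
  moreover have "finite {y \<in> M. v \<le> y}"
    using fin by simp
  ultimately show ?thesis
    by (simp add: card_Diff_subset card_largest[OF fin k])
next
  case False
  then have "largest k M \<subseteq> {y \<in> M. v \<le> y}"
    using largest_subset[of k M] by auto
  then have "card (largest k M) \<le> card {y \<in> M. v \<le> y}"
    using fin by (intro card_mono) auto
  then have "k \<le> card {y \<in> M. v \<le> y}"
    by (simp add: card_largest[OF fin k])
  with False show ?thesis
    by simp
qed

lemma set_cap_col:
  "set (cap_col n c) = {x \<in> set c. x \<le> n} \<union> largest (card {x \<in> set c. n < x}) ({1..n} - set c)"
proof -
  have "finite (largest (card {x \<in> set c. n < x}) ({1..n} - set c))"
    by (rule finite_subset[OF largest_subset]) simp
  then show ?thesis
    by (simp add: cap_col_def)
qed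

lemma strict_sorted_cap_col: "sorted_wrt (<) (cap_col n c)"
  by (simp add: cap_col_def)

lemma cap_col_mono:
  assumes "set c' \<subseteq> set c"
  shows "set (cap_col n c') \<subseteq> set (cap_col n c)"
proof -
  have "card {x \<in> set c'. n < x} \<le> card {x \<in> set c. n < x}"
    using assms by (intro card_mono) auto
  then have "largest (card {x \<in> set c'. n < x}) ({1..n} - set c') \<inter> ({1..n} - set c)
      \<subseteq> largest (card {x \<in> set c. n < x}) ({1..n} - set c)"
    using assms by (intro largest_mono) auto
  moreover have "largest (card {x \<in> set c'. n < x}) ({1..n} - set c') \<subseteq> {1..n} - set c'"
    by (rule largest_subset)
  ultimately show ?thesis
    using assms unfolding set_cap_col by auto
qed

context
  fixes n :: nat and c :: "nat list"
  assumes distinct: "distinct c" and positive: "\<forall>x \<in> set c. 0 < x" and length: "length c \<le> n"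
begin

lemma card_le_add_card_gt: "card {x \<in> set c. x \<le> n} + card {x \<in> set c. n < x} = length c"
proof -
  have "card ({x \<in> set c. x \<le> n} \<union> {x \<in> set c. n < x})
      = card {x \<in> set c. x \<le> n} + card {x \<in> set c. n < x}"
    by (rule card_Un_disjoint) auto
  moreover have "{x \<in> set c. x \<le> n} \<union> {x \<in> set c. n < x} = set c"
    by auto
  ultimately show ?thesis
    using distinct by (simp add: distinct_card)
qed

lemma card_missing_entries: "card ({1..n} - set c) = n - card {x \<in> set c. x \<le> n}"
proof -
  have "{1..n} - set c = {1..n} - {x \<in> set c. x \<le> n}" and "{x \<in> set c. x \<le> n} \<subseteq> {1..n}"
    using positive by auto
  then show ?thesis
    by (simp add: card_Diff_subset finite_subset)
qed

lemma card_gt_le_card_missing_entries: "card {x \<in> set c. n < x} \<le> card ({1..n} - set c)"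
  using card_le_add_card_gt card_missing_entries length by simp

lemma length_cap_col: "length (cap_col n c) = length c"
proof -
  let ?L = "largest (card {x \<in> set c. n < x}) ({1..n} - set c)"
  have "card ?L = card {x \<in> set c. n < x}"
    using card_largest[OF _ card_gt_le_card_missing_entries] by simp
  moreover have "{x \<in> set c. x \<le> n} \<inter> ?L = {}"
    using largest_subset by blast
  moreover have "finite ?L"
    by (rule finite_subset[OF largest_subset]) simp
  ultimately have "card (set (cap_col n c)) = length c"
    unfolding set_cap_col using card_le_add_card_gt by (simp add: card_Un_disjoint)
  then show ?thesis
    using strict_sorted_cap_col by (simp add: strict_sorted_iff distinct_card)
qed

lemma set_cap_col_subset: "set (cap_col n c) \<subseteq> {1..n}"
  using positive largest_subset unfolding set_cap_col by fastforce

lemma card_cap_col_less: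
  assumes "1 \<le> v" "v \<le> n"
  shows "card {x \<in> set (cap_col n c). x < v} = max (card {x \<in> set c. x < v}) (length c + v - Suc n)"
proof -
  define M where "M = {1..n} - set c"
  define k where "k = card {x \<in> set c. n < x}"
  define L where "L = largest k M"
  define a where "a = card {x \<in> set c. x < v}"
  define b where "b = card {x \<in> set c. v \<le> x \<and> x \<le> n}"
  have "{x \<in> set (cap_col n c). x < v} = {x \<in> set c. x < v} \<union> {x \<in> L. x < v}"
    unfolding set_cap_col L_def k_def M_def using assms(2) by auto
  moreover have "{x \<in> set c. x < v} \<inter> {x \<in> L. x < v} = {}"
    using largest_subset unfolding L_def M_def by blast
  moreover have "finite L"
    unfolding L_def M_def by (rule finite_subset[OF largest_subset]) simp
  ultimately have split: "card {x \<in> set (cap_col n c). x < v} = a + card {x \<in> L. x < v}"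
    unfolding a_def by (simp add: card_Un_disjoint)
  have "{y \<in> M. v \<le> y} = {v..n} - {x \<in> set c. v \<le> x \<and> x \<le> n}"
    unfolding M_def using assms(1) by auto
  moreover have "card ({v..n} - {x \<in> set c. v \<le> x \<and> x \<le> n}) = card {v..n} - b"
    unfolding b_def by (rule card_Diff_subset) auto
  ultimately have "card {y \<in> M. v \<le> y} = Suc n - v - b"
    by simp
  then have below_L: "card {x \<in> L. x < v} = k - (Suc n - v - b)"
    unfolding L_def M_def k_def using card_largest_less[OF _ card_gt_le_card_missing_entries] by simp
  have "{x \<in> set c. x \<le> n} = {x \<in> set c. x < v} \<union> {x \<in> set c. v \<le> x \<and> x \<le> n}"
    using assms(2) by auto
  moreover have "card ({x \<in> set c. x < v} \<union> {x \<in> set c. v \<le> x \<and> x \<le> n}) = a + b"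
    unfolding a_def b_def by (rule card_Un_disjoint) auto
  ultimately have "a + b + k = length c"
    using card_le_add_card_gt unfolding k_def by (simp only:)
  moreover have "b \<le> card {v..n}"
    unfolding b_def by (intro card_mono) auto
  ultimately show ?thesis
    unfolding split below_L a_def[symmetric] using assms(2) by (simp add: max_def) arith
qed

lemma cap_col_nth:
  assumes sorted: "sorted_wrt (<) c" and j: "j < length c"
  shows "cap_col n c ! j = min (c ! j) (n + Suc j - length c)"
proof -
  have le_iff: "v \<le> cap_col n c ! j \<longleftrightarrow> v \<le> min (c ! j) (n + Suc j - length c)"
    if "1 \<le> v" "v \<le> n" for v
  proof -
    have "length c + v - Suc n \<le> j \<longleftrightarrow> v \<le> n + Suc j - length c"
      using j length by arith
    then show ?thesis
      using le_nth_iff_card_less[OF strict_sorted_cap_col, of j n c v]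
        le_nth_iff_card_less[OF sorted j, of v] card_cap_col_less[OF that] j
      by (simp add: length_cap_col)
  qed
  have "cap_col n c ! j \<in> set (cap_col n c)"
    using j by (simp add: length_cap_col)
  then have "cap_col n c ! j \<in> {1..n}"
    using set_cap_col_subset by blast
  moreover have "min (c ! j) (n + Suc j - length c) \<in> {1..n}"
    using positive nth_mem[OF j] j length by fastforce
  ultimately show ?thesis
    using le_iff[of "cap_col n c ! j"] le_iff[of "min (c ! j) (n + Suc j - length c)"]
    by (meson antisym atLeastAtMost_iff order_refl)
qed

end

lemma le_cap_col_iff:
  fixes c c' :: "nat list"
  assumes sorted: "sorted_wrt (<) c" and positive: "\<forall>x \<in> set c. 0 < x" and length: "length c \<le> n"
    and sorted': "sorted_wrt (<) c'" and same_length: "length c' = length c"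
  shows "(\<forall>j < length c. c' ! j \<le> cap_col n c ! j) \<longleftrightarrow>
         (\<forall>j < length c. c' ! j \<le> c ! j) \<and> (\<forall>x \<in> set c'. x \<le> n)"
proof -
  have distinct: "distinct c"
    using sorted by (simp add: strict_sorted_iff)
  have "c' ! j \<le> n + Suc j - length c \<longleftrightarrow> c' ! j + length c' \<le> n + Suc j"
    if "j < length c" for j
    using that length same_length by arith
  then show ?thesis
    using cap_col_nth[OF distinct positive length sorted] strict_sorted_set_le_iff[OF sorted', of n]
      same_length by auto
qed

lemma length_le_num_rows:
  assumes "is_tableau T" "c \<in> set T"
  shows "length c \<le> num_rows T"
proof (cases T)
  case (Cons d ds)
  with assms show ?thesis
    by (auto simp: is_tableau_def shape_def num_rows_def)
qed (use assms in simp)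

lemma is_key_columnD:
  assumes "is_key T" "c \<in> set T"
  shows "sorted_wrt (<) c" "distinct c" "\<forall>x \<in> set c. 0 < x" "c \<noteq> []"
  using assms by (auto simp: is_key_def is_tableau_def strict_sorted_iff)

context
  fixes T :: tableau and n :: nat
  assumes key: "is_key T" and rows: "num_rows T \<le> n"
begin

lemma length_column_le: "c \<in> set T \<Longrightarrow> length c \<le> n"
  using length_le_num_rows[of T c] key rows by (simp add: is_key_def)

lemma shape_cap: "shape (cap n T) = shape T"
  unfolding shape_def cap_def
  using length_cap_col[OF is_key_columnD(2,3)[OF key] length_column_le] by simp

lemma is_key_cap: "is_key (cap n T)"
proof -
  have "c \<noteq> [] \<and> (\<forall>x \<in> set c. 0 < x) \<and> sorted_wrt (<) c"
    if c: "c \<in> set (cap n T)" for c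
  proof -
    obtain d where d: "d \<in> set T" "c = cap_col n d"
      using c by (auto simp: cap_def)
    note col = is_key_columnD[OF key d(1)]
    show ?thesis
      using length_cap_col[OF col(2,3) length_column_le[OF d(1)]]
        set_cap_col_subset[OF col(2,3) length_column_le[OF d(1)]] strict_sorted_cap_col col(4) d(2)
      by fastforce
  qed
  moreover have "set (cap n T ! Suc i) \<subseteq> set (cap n T ! i)" if "Suc i < length (cap n T)" for i
    using key that cap_col_mono by (simp add: is_key_def cap_def)
  ultimately show ?thesis
    using key shape_cap by (simp add: is_key_def is_tableau_def)
qed

lemma tab_le_cap_iff:
  assumes sorted': "\<forall>c \<in> set T'. sorted_wrt (<) c" and same_shape: "shape T' = shape T"
  shows "tab_le T' (cap n T) \<longleftrightarrow> tab_le T' T \<and> max_entry_le T' n"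
proof -
  have length: "length T' = length T"
    using same_shape unfolding shape_def by (metis length_map)
  have column_length: "length (T' ! i) = length (T ! i)" if "i < length T" for i
    using same_shape that length unfolding shape_def by (metis nth_map)
  have "(\<forall>j < length (T' ! i). T' ! i ! j \<le> cap n T ! i ! j) \<longleftrightarrow>
      (\<forall>j < length (T' ! i). T' ! i ! j \<le> T ! i ! j) \<and> (\<forall>x \<in> set (T' ! i). x \<le> n)"
    if i: "i < length T" for i
  proof -
    have "T ! i \<in> set T" "T' ! i \<in> set T'"
      using i length by simp_all
    then show ?thesis
      using le_cap_col_iff[OF is_key_columnD(1,3)[OF key] length_column_le, of "T ! i" "T' ! i"]
        sorted' column_length[OF i] i by (simp add: cap_def)
  qed
  moreover have "max_entry_le T' n \<longleftrightarrow> (\<forall>i < length T. \<forall>x \<in> set (T' ! i). x \<le> n)"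
    unfolding max_entry_le_def using length by (metis in_set_conv_nth)
  ultimately show ?thesis
    unfolding tab_le_def using shape_cap same_shape length by auto
qed

end

theorem lemma3p2:
  fixes T :: tableau and n :: nat
  assumes "is_key T" and "num_rows T \<le> n"
  shows "is_key (cap n T) \<and>
    (\<forall>T'. is_key T' \<and> shape T' = shape T \<longrightarrow>
       (tab_le T' (cap n T) \<longleftrightarrow> tab_le T' T \<and> max_entry_le T' n))"
  using is_key_cap[OF assms] tab_le_cap_iff[OF assms] is_key_columnD(1) by blast

end
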